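(* Let $B=B_{\mathbb{S}^3_\theta}$ carry the Riemannian structure induced from $\mathbb{R}^4_\theta$ as described in the context, and let $\widetilde f=\tfrac12\sum_{i,j}h_{ij}z^iz^j=\tfrac12(z^1z^3-z^2z^4)$ (a central element of $B$) and $C=B/(\widetilde f)$. Then the $1$-form $\widetilde\nu:=\mathrm{d}_B\widetilde f=\sum_{i,j=1}^4h_{ij}\,z^i\,\mathrm{d}z^j\in\Omega^1_B$ is central and satisfies $[g_B^{-1}(\widetilde\nu\otimes_B\widetilde\nu)]=1$ in $C$; hence $C$ is a noncommutative hypersurface of $B$ (with basis $[\widetilde\nu]$ of $N^1_C$). The projector $\widetilde\Pi:\widetilde q_!(\Omega^1_B)\to\widetilde q_!(\Omega^1_B)$, $[\omega]\mapsto[\omega-g_B^{-1}(\omega\otimes_B\widetilde\nu)\widetilde\nu]$, is given by $\widetilde\Pi(\mathrm{d}z^i)=\mathrm{d}z^i+(-1)^i\,z^i\,\widetilde\nu$.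
   Context: $\theta\in\mathbb{R}$; $R=(R^{ab})$ (row $a$, column $b$) with rows $(1,e^{-i\theta},1,e^{i\theta})$, $(e^{i\theta},1,e^{-i\theta},1)$, $(1,e^{i\theta},1,e^{-i\theta})$, $(e^{-i\theta},1,e^{i\theta},1)$; $A=\mathbb{C}\langle z^1,\dots,z^4\rangle/(z^iz^j-R^{ji}z^jz^i)$; $\Omega^1_A=\bigoplus_iA\,\mathrm{d}z^i$ free left module with $\mathrm{d}z^i\,z^j=R^{ji}z^j\mathrm{d}z^i$, $\mathrm{d}$ Leibniz extension of $z^i\mapsto\mathrm{d}z^i$. $P$ with rows $(0,0,1,0),(0,0,0,1),(1,0,0,0),(0,1,0,0)$, $(g_{ij})=\tfrac12P$, $(g^{ij})=2P$; $(h_{ij})=\tfrac12Q$ with $Q$ having rows $(0,0,1,0),(0,0,0,-1),(1,0,0,0),(0,-1,0,0)$. $B=A/(f)$ with $f=\tfrac12(z^1z^3+z^2z^4-1)$; $\Omega^1_B$ is the quotient of $\Omega^1_A/(f\Omega^1_A+\Omega^1_Af)$ by the $B$-subbimodule generated by $[\mathrm{d}f]$, with $\mathrm{d}_B[a]=[\mathrm{d}a]$ (classes are suppressed in notation). The induced Riemannian structure on $B$ is given by $g_B=\sum g_{ij}\mathrm{d}z^i\otimes_B\mathrm{d}z^j$, inverse metric $g_B^{-1}(\mathrm{d}z^i\otimes_B\mathrm{d}z^j)=g^{ij}-z^iz^j$ (extended as $B$-bimodule map), $\nabla_B(\mathrm{d}z^i)=-z^i\sum g_{kl}\mathrm{d}z^k\otimes_B\mathrm{d}z^l$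 (with left Leibniz rule), $\sigma_B(\mathrm{d}z^i\otimes_B\mathrm{d}z^j)=R^{ji}\mathrm{d}z^j\otimes_B\mathrm{d}z^i$. Hypersurface notions (for an algebra $B$ with calculus $\Omega^1_B$ and inverse metric $g_B^{-1}$): for $C=B/J$, $J$ a two-sided ideal, $\widetilde q:B\to C$, $\widetilde q_!(\Omega^1_B)=\Omega^1_B/(J\Omega^1_B+\Omega^1_BJ)$, $N^1_C$ the $C$-subbimodule generated by $[\mathrm{d}_Ba]$, $a\in J$, $\Omega^1_C=\widetilde q_!(\Omega^1_B)/N^1_C$. $C$ is a (metrically co-orientable) noncommutative hypersurface if $N^1_C$ is free of rank one with basis $[\widetilde\nu]$, $\widetilde\nu\in\Omega^1_B$ central, $[g_B^{-1}(\widetilde\nu\otimes_B\widetilde\nu)]=1\in C$. *)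

theory Defs
  imports Complex_Main
begin

text \<open>The free algebra F = C<z1,...,z4> is represented by coefficient
functions on words (letters 1..4), restricted to the finitely supported ones (FA).
All algebras (A, B, C) and bimodules (Omega^1_A, Omega^1_B, q_!(Omega^1_B), N^1_C)
are represented as quotients of F resp. of F^4 (coefficients of dz^1..dz^4),
i.e. statements in a quotient are stated as membership of a difference of
representatives in the corresponding (generated) ideal / sub-bimodule.\<close>

type_synonym fa = "nat list \<Rightarrow> complex"
type_synonym om = "nat \<Rightarrow> fa"

definition Rm :: "real \<Rightarrow> nat \<Rightarrow> nat \<Rightarrow> complex" where
  "Rm \<theta> a b =
    [[1, cis (-\<theta>), 1, cis \<theta>],
     [cis \<theta>, 1, cis (-\<theta>), 1],
     [1, cis \<theta>, 1, cis (-\<theta>)],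
     [cis (-\<theta>), 1, cis \<theta>, 1]] ! (a - 1) ! (b - 1)"

definition Pm :: "nat \<Rightarrow> nat \<Rightarrow> complex" where
  "Pm a b = (if (a, b) \<in> {(1,3), (3,1), (2,4), (4,2)} then 1 else 0)"

definition Qm :: "nat \<Rightarrow> nat \<Rightarrow> complex" where
  "Qm a b = (if (a, b) \<in> {(1,3), (3,1)} then 1
             else if (a, b) \<in> {(2,4), (4,2)} then -1 else 0)"

definition glow :: "nat \<Rightarrow> nat \<Rightarrow> complex" where "glow a b = Pm a b / 2"
definition gup :: "nat \<Rightarrow> nat \<Rightarrow> complex" where "gup a b = 2 * Pm a b"
definition hlow :: "nat \<Rightarrow> nat \<Rightarrow> complex" where "hlow a b = Qm a b / 2"

definition FA :: "fa set" where
  "FA = {p. finite {w. p w \<noteq> 0} \<and> (\<forall>w. p w \<noteq> 0 \<longrightarrow> set w \<subseteq> {1..4})}"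

definition fzero :: fa where "fzero = (\<lambda>_. 0)"
definition fadd :: "fa \<Rightarrow> fa \<Rightarrow> fa" where "fadd p q = (\<lambda>w. p w + q w)"
definition fsub :: "fa \<Rightarrow> fa \<Rightarrow> fa" where "fsub p q = (\<lambda>w. p w - q w)"
definition fsmul :: "complex \<Rightarrow> fa \<Rightarrow> fa" where "fsmul c p = (\<lambda>w. c * p w)"
definition fmul :: "fa \<Rightarrow> fa \<Rightarrow> fa" where
  "fmul p q = (\<lambda>w. \<Sum>k\<le>length w. p (take k w) * q (drop k w))"
definition mono :: "nat list \<Rightarrow> fa" where "mono w = (\<lambda>v. if v = w then 1 else 0)"
definition fone :: fa where "fone = mono []"
definition zg :: "nat \<Rightarrow> fa" where "zg i = mono [i]"

text \<open>dz^i p = (twist i p) dz^i, from dz^i z^j = R^{ji} z^j dz^i.\<close>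
definition twist :: "real \<Rightarrow> nat \<Rightarrow> fa \<Rightarrow> fa" where
  "twist \<theta> i p = (\<lambda>w. prod_list (map (\<lambda>j. Rm \<theta> j i) w) * p w)"

(* 1-forms: omega = sum_i omega(i) dz^i *)
definition FA4 :: "om set" where
  "FA4 = {\<omega>. (\<forall>i. \<omega> i \<in> FA) \<and> (\<forall>i. i \<notin> {1..4} \<longrightarrow> \<omega> i = fzero)}"

definition ozero :: om where "ozero = (\<lambda>_. fzero)"
definition oadd :: "om \<Rightarrow> om \<Rightarrow> om" where "oadd \<omega> \<eta> = (\<lambda>i. fadd (\<omega> i) (\<eta> i))"
definition osub :: "om \<Rightarrow> om \<Rightarrow> om" where "osub \<omega> \<eta> = (\<lambda>i. fsub (\<omega> i) (\<eta> i))"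
definition olmul :: "fa \<Rightarrow> om \<Rightarrow> om" where "olmul p \<omega> = (\<lambda>i. fmul p (\<omega> i))"
definition ormul :: "real \<Rightarrow> om \<Rightarrow> fa \<Rightarrow> om" where
  "ormul \<theta> \<omega> p = (\<lambda>i. fmul (\<omega> i) (twist \<theta> i p))"
definition dz :: "nat \<Rightarrow> om" where "dz i = (\<lambda>j. if j = i then fone else fzero)"

text \<open>Exterior derivative (Leibniz extension of z^i |-> dz^i), written in the left basis:
d(u z^i s) contributes u (twist i s) dz^i.\<close>
definition dA :: "real \<Rightarrow> fa \<Rightarrow> om" where
  "dA \<theta> p = (\<lambda>i. if i \<in> {1..4} then
      (\<lambda>v. \<Sum>k\<le>length v. p (take k v @ [i] @ drop k v)
                           * prod_list (map (\<lambda>j. Rm \<theta> j i) (drop k v)))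
    else fzero)"

text \<open>Inverse metric g_B^{-1}(omega \<otimes>_B eta), extended as bimodule map:
 omega \<otimes> eta = sum_{ij} omega_i twist_i(eta_j) dz^i \<otimes> dz^j.\<close>
definition ginv :: "real \<Rightarrow> om \<Rightarrow> om \<Rightarrow> fa" where
  "ginv \<theta> \<omega> \<eta> = (\<lambda>w. \<Sum>i\<in>{1..4}. \<Sum>j\<in>{1..4}.
      fmul (\<omega> i) (fmul (twist \<theta> i (\<eta> j)) (fsub (fsmul (gup i j) fone) (fmul (zg i) (zg j)))) w)"

inductive_set ideal_gen :: "fa set \<Rightarrow> fa set" for G where
  gen: "p \<in> G \<Longrightarrow> p \<in> ideal_gen G"
| zero: "fzero \<in> ideal_gen G"
| add: "p \<in> ideal_gen G \<Longrightarrow> q \<in> ideal_gen G \<Longrightarrow> fadd p q \<in> ideal_gen G"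
| lmul: "p \<in> ideal_gen G \<Longrightarrow> a \<in> FA \<Longrightarrow> fmul a p \<in> ideal_gen G"
| rmul: "p \<in> ideal_gen G \<Longrightarrow> a \<in> FA \<Longrightarrow> fmul p a \<in> ideal_gen G"

inductive_set bimod_gen :: "real \<Rightarrow> om set \<Rightarrow> om set" for \<theta> S where
  gen: "x \<in> S \<Longrightarrow> x \<in> bimod_gen \<theta> S"
| zero: "ozero \<in> bimod_gen \<theta> S"
| add: "x \<in> bimod_gen \<theta> S \<Longrightarrow> y \<in> bimod_gen \<theta> S \<Longrightarrow> oadd x y \<in> bimod_gen \<theta> S"
| lmul: "x \<in> bimod_gen \<theta> S \<Longrightarrow> a \<in> FA \<Longrightarrow> olmul a x \<in> bimod_gen \<theta> S"
| rmul: "x \<in> bimod_gen \<theta> S \<Longrightarrow> a \<in> FA \<Longrightarrow> ormul \<theta> x a \<in> bimod_gen \<theta> S"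

definition relsA :: "real \<Rightarrow> fa set" where
  "relsA \<theta> = {fsub (fmul (zg i) (zg j)) (fsmul (Rm \<theta> j i) (fmul (zg j) (zg i))) | i j.
               i \<in> {1..4} \<and> j \<in> {1..4}}"

definition fS :: fa where
  "fS = fsmul (1/2) (fsub (fadd (fmul (zg 1) (zg 3)) (fmul (zg 2) (zg 4))) fone)"

definition ftil :: fa where
  "ftil = (\<lambda>w. \<Sum>i\<in>{1..4}. \<Sum>j\<in>{1..4}. (1/2) * hlow i j * fmul (zg i) (zg j) w)"

(* B = F / JB, C = F / JC (= B/(ftil)) *)
definition JB :: "real \<Rightarrow> fa set" where "JB \<theta> = ideal_gen (relsA \<theta> \<union> {fS})"
definition JC :: "real \<Rightarrow> fa set" where "JC \<theta> = ideal_gen (relsA \<theta> \<union> {fS, ftil})"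

text \<open>Relations J Omega + Omega J for an ideal J (given by its preimage in F).\<close>
definition qrel :: "real \<Rightarrow> fa set \<Rightarrow> om set" where
  "qrel \<theta> J = {olmul p \<omega> | p \<omega>. p \<in> J \<and> \<omega> \<in> FA4} \<union> {ormul \<theta> \<omega> p | p \<omega>. p \<in> J \<and> \<omega> \<in> FA4}"

(* Omega^1_B = F^4 / MB *)
definition MB :: "real \<Rightarrow> om set" where
  "MB \<theta> = bimod_gen \<theta> (qrel \<theta> (JB \<theta>) \<union> {dA \<theta> fS})"

(* q_!(Omega^1_B) = F^4 / MC *)
definition MC :: "real \<Rightarrow> om set" where
  "MC \<theta> = bimod_gen \<theta> (MB \<theta> \<union> qrel \<theta> (JC \<theta>))"

(* N^1_C = NC / MC, the subbimodule generated by [d_B a], a in (ftil) *)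
definition NC :: "real \<Rightarrow> om set" where
  "NC \<theta> = bimod_gen \<theta> (MC \<theta> \<union> {dA \<theta> a | a. a \<in> JC \<theta>})"

definition nu :: "real \<Rightarrow> om" where "nu \<theta> = dA \<theta> ftil"

text \<open>C = B/(ftil) is a (metrically co-orientable) noncommutative hypersurface,
with N^1_C free of rank one (as left C-module) with basis [nu].\<close>
definition nc_hypersurface_basis :: "real \<Rightarrow> om \<Rightarrow> bool" where
  "nc_hypersurface_basis \<theta> \<nu> \<longleftrightarrow>
     \<nu> \<in> FA4
   \<and> (\<forall>p\<in>FA. osub (olmul p \<nu>) (ormul \<theta> \<nu> p) \<in> MB \<theta>)
   \<and> fsub (ginv \<theta> \<nu> \<nu>) fone \<in> JC \<theta>
   \<and> \<nu> \<in> NC \<theta>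
   \<and> (\<forall>n\<in>NC \<theta>. \<exists>c\<in>FA. osub n (olmul c \<nu>) \<in> MC \<theta>)
   \<and> (\<forall>c\<in>FA. olmul c \<nu> \<in> MC \<theta> \<longrightarrow> c \<in> JC \<theta>)"

definition Pi_proj :: "real \<Rightarrow> om \<Rightarrow> om" where
  "Pi_proj \<theta> \<omega> = osub \<omega> (olmul (ginv \<theta> \<omega> (nu \<theta>)) (nu \<theta>))"

end

(*
  For a one-form w = sum_i w_i dz^i write <w> = sum_i (-1)^(i+1) w_i z^i.  Modulo the
  relations of A, moving z^i past a coefficient twists it exactly as moving dz^i does, so

    g^-1(w (x) h) = sum_ij g^ij w_i twist_i(h_j) - (sum_i w_i z^i) (sum_j h_j z^j).

  For h = nu = d f~ = (z^3, -z^4, z^1, -z^2)/2 the first sum is <w>, and sum_j nu_j z^j = 2 f~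
  vanishes in C.  Hence g^-1(w (x) nu) = <w> in C; in particular g^-1(nu (x) nu) = <nu> = 1
  by the sphere relation, and Pi(dz^i) = dz^i - <dz^i> nu = dz^i + (-1)^i z^i nu.

  The map <.> sends the relations defining q_!(Omega^1_B) into the ideal of C (it maps d f
  to 2 f~), so c nu = 0 forces c = c <nu> = <c nu> = 0 in C: N^1_C is free on nu.  It is
  generated by nu because d kills the relations of A, d f is zero in Omega^1_B and nu is
  central; centrality of nu and of f~ comes from twist_i twist_j = id for {i, j} = {1, 3}
  and {i, j} = {2, 4}.
*)
theory Submission
  imports Defs
begin

lemma sum_atMost_triangle:
  fixes g :: "nat \<Rightarrow> nat \<Rightarrow> 'a::comm_monoid_add"
  shows "(\<Sum>k\<le>n. \<Sum>i\<le>k. g i (k - i)) = (\<Sum>i\<le>n. \<Sum>j\<le>n - i. g i j)"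
proof -
  have "(\<Sum>k\<le>n. \<Sum>i\<le>k. g i (k - i)) = (\<Sum>(i, j)\<in>{(i, j). i + j \<le> n}. g i j)"
    by (rule sum.triangle_reindex_eq[symmetric])
  also have "{(i, j). i + j \<le> n} = Sigma {..n} (\<lambda>i. {..n - i})"
    by auto
  also have "(\<Sum>(i, j)\<in>Sigma {..n} (\<lambda>i. {..n - i}). g i j) = (\<Sum>i\<le>n. \<Sum>j\<le>n - i. g i j)"
    by (rule sum.Sigma[symmetric]) auto
  finally show ?thesis .
qed

lemma sum_atMost_atLeastAtMost_swap:
  fixes g :: "nat \<Rightarrow> nat \<Rightarrow> 'a::comm_monoid_add"
  shows "(\<Sum>k\<le>n. \<Sum>m\<in>{k..n}. g k m) = (\<Sum>m\<le>n. \<Sum>k\<le>m. g k m)"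
proof -
  have "(\<Sum>k\<le>n. \<Sum>m\<in>{k..n}. g k m) = (\<Sum>k\<le>n. \<Sum>m | m \<in> {..n} \<and> k \<le> m. g k m)"
    by (intro sum.cong) auto
  also have "\<dots> = (\<Sum>m\<le>n. \<Sum>k | k \<in> {..n} \<and> k \<le> m. g k m)"
    by (rule sum.swap_restrict) auto
  also have "\<dots> = (\<Sum>m\<le>n. \<Sum>k\<le>m. g k m)"
    by (intro sum.cong) auto
  finally show ?thesis .
qed

lemma sum_atMost_Suc_split:
  fixes f :: "nat \<Rightarrow> 'a::comm_monoid_add"
  assumes "k \<le> n"
  shows "(\<Sum>m\<le>Suc n. f m) = (\<Sum>m\<le>k. f m) + (\<Sum>m\<in>{k..n}. f (Suc m))"
proof -
  have "{..Suc n} = {..k} \<union> Suc ` {k..n}" and "{..k} \<inter> Suc ` {k..n} = {}"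
    using assms by (auto simp: image_iff)
  then have "(\<Sum>m\<le>Suc n. f m) = (\<Sum>m\<le>k. f m) + (\<Sum>m\<in>Suc ` {k..n}. f m)"
    by (metis finite_atMost finite_imageI finite_atLeastAtMost sum.union_disjoint)
  also have "(\<Sum>m\<in>Suc ` {k..n}. f m) = (\<Sum>m\<in>{k..n}. f (Suc m))"
    by (subst sum.reindex) auto
  finally show ?thesis .
qed

section \<open>The free algebra\<close>

text \<open>Not declared \<open>[simp]\<close> (nor \<open>om_apply\<close>, \<open>ozero_apply\<close> below): the simplifier would also
  rewrite unapplied occurrences such as \<open>fadd p q\<close>, eta-expanding them into lambda terms.\<close>

lemma fa_apply:
  "fadd p q w = p w + q w" "fsub p q w = p w - q w" "fsmul c p w = c * p w" "fzero w = 0"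
  "mono u w = (if w = u then 1 else 0)"
  by (simp_all add: fadd_def fsub_def fsmul_def fzero_def mono_def)

lemma fmul_assoc: "fmul (fmul p q) r = fmul p (fmul q r)"
proof (rule ext)
  fix w :: "nat list"
  define g where "g i j = p (take i w) * q (take j (drop i w)) * r (drop (i + j) w)" for i j
  have "fmul (fmul p q) r w = (\<Sum>k\<le>length w. \<Sum>i\<le>k. g i (k - i))"
    unfolding fmul_def by (intro sum.cong refl) (simp add: sum_distrib_right g_def min_def drop_take)
  also have "\<dots> = (\<Sum>i\<le>length w. \<Sum>j\<le>length w - i. g i j)"
    by (rule sum_atMost_triangle)
  also have "\<dots> = fmul p (fmul q r) w"
    unfolding fmul_def by (intro sum.cong refl) (simp add: sum_distrib_left g_def mult.assoc add.commute)
  finally show "fmul (fmul p q) r w = fmul p (fmul q r) w" .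
qed

lemma fmul_fadd_left: "fmul (fadd p q) r = fadd (fmul p r) (fmul q r)"
  and fmul_fadd_right: "fmul p (fadd q r) = fadd (fmul p q) (fmul p r)"
  and fmul_fsub_left: "fmul (fsub p q) r = fsub (fmul p r) (fmul q r)"
  and fmul_fsub_right: "fmul p (fsub q r) = fsub (fmul p q) (fmul p r)"
  and fmul_fsmul_left: "fmul (fsmul c p) q = fsmul c (fmul p q)"
  and fmul_fsmul_right: "fmul p (fsmul c q) = fsmul c (fmul p q)"
  by (rule ext; simp add: fa_apply fmul_def sum.distrib sum_subtractf sum_distrib_left ring_distribs mult_ac)+

lemma fmul_fzero [simp]: "fmul fzero p = fzero" "fmul p fzero = fzero"
  by (rule ext; simp add: fmul_def fa_apply)+

lemma fmul_mono_mono: "fmul (mono u) (mono v) = mono (u @ v)"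
proof (rule ext)
  fix w
  have "fmul (mono u) (mono v) w = (\<Sum>k\<le>length w. if k = length u \<and> w = u @ v then 1 else 0)"
    unfolding fmul_def by (intro sum.cong refl) (auto simp: fa_apply min_def)
  then show "fmul (mono u) (mono v) w = mono (u @ v) w"
    by (simp add: fa_apply)
qed

lemma fmul_fone [simp]: "fmul fone p = p" "fmul p fone = p"
proof -
  have "fmul fone p w = (\<Sum>k\<le>length w. if k = 0 then p w else 0)"
    and "fmul p fone w = (\<Sum>k\<le>length w. if k = length w then p w else 0)" for w
    unfolding fmul_def fone_def by (intro sum.cong refl; auto simp: fa_apply)+
  then show "fmul fone p = p" "fmul p fone = p"
    by auto
qed

lemma fsmul_simps [simp]:
  "fsmul c (fsmul d p) = fsmul (c * d) p" "fsmul 1 p = p" "fsmul 0 p = fzero" "fsmul c fzero = fzero"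
  by (rule ext; simp add: fa_apply)+

lemma fzero_simps [simp]: "fadd p fzero = p" "fadd fzero p = p" "fsub p fzero = p" "fsub p p = fzero"
  by (rule ext; simp add: fa_apply)+

definition fsupp :: "fa \<Rightarrow> nat list set" where
  "fsupp p = {w. p w \<noteq> 0}"

lemma FA_iff: "p \<in> FA \<longleftrightarrow> finite (fsupp p) \<and> (\<forall>w\<in>fsupp p. set w \<subseteq> {1..4})"
  by (auto simp: FA_def fsupp_def)

lemma FA_fsupp_subset: "q \<in> FA \<Longrightarrow> fsupp p \<subseteq> fsupp q \<Longrightarrow> p \<in> FA"
  by (auto simp: FA_iff intro: finite_subset)

lemma FA_fsupp_subset_Un: "q \<in> FA \<Longrightarrow> r \<in> FA \<Longrightarrow> fsupp p \<subseteq> fsupp q \<union> fsupp r \<Longrightarrow> p \<in> FA"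
  by (auto simp: FA_iff intro: finite_subset)

lemma FA_fzero [simp]: "fzero \<in> FA"
  and FA_fone [simp]: "fone \<in> FA"
  by (auto simp: FA_def fone_def fa_apply)

lemma FA_fsmul [intro, simp]: "p \<in> FA \<Longrightarrow> fsmul c p \<in> FA"
  by (erule FA_fsupp_subset) (auto simp: fa_apply fsupp_def)

lemma FA_twist [intro, simp]: "p \<in> FA \<Longrightarrow> twist \<theta> i p \<in> FA"
  by (erule FA_fsupp_subset) (auto simp: fsupp_def twist_def)

lemma FA_fadd [intro, simp]: "p \<in> FA \<Longrightarrow> q \<in> FA \<Longrightarrow> fadd p q \<in> FA"
  by (erule FA_fsupp_subset_Un) (auto simp: fa_apply fsupp_def)

lemma FA_fsub [intro, simp]: "p \<in> FA \<Longrightarrow> q \<in> FA \<Longrightarrow> fsub p q \<in> FA"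
  by (erule FA_fsupp_subset_Un) (auto simp: fa_apply fsupp_def)

lemma FA_mono [intro]: "set u \<subseteq> {1..4} \<Longrightarrow> mono u \<in> FA"
  by (simp add: fa_apply FA_def)

lemma FA_zg [intro, simp]: "i \<in> {1..4} \<Longrightarrow> zg i \<in> FA"
  by (auto simp: zg_def)

lemma fsupp_fmul: "fsupp (fmul p q) \<subseteq> (\<lambda>(u, v). u @ v) ` (fsupp p \<times> fsupp q)"
proof
  fix w assume "w \<in> fsupp (fmul p q)"
  then obtain k where "p (take k w) * q (drop k w) \<noteq> 0"
    by (auto simp: fsupp_def fmul_def intro: sum.not_neutral_contains_not_neutral)
  then show "w \<in> (\<lambda>(u, v). u @ v) ` (fsupp p \<times> fsupp q)"
    by (intro image_eqI[of _ _ "(take k w, drop k w)"]) (auto simp: fsupp_def)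
qed

lemma FA_fmul [intro, simp]:
  assumes "p \<in> FA" and "q \<in> FA"
  shows "fmul p q \<in> FA"
  unfolding FA_iff
proof
  show "finite (fsupp (fmul p q))"
    using assms by (auto simp: FA_iff intro: finite_subset[OF fsupp_fmul])
  show "\<forall>w\<in>fsupp (fmul p q). set w \<subseteq> {1..4}"
    using assms fsupp_fmul[of p q] by (fastforce simp: FA_iff)
qed

lemma FA_induct [consumes 1, case_names zero add mono]:
  assumes "p \<in> FA"
    and zero: "P fzero"
    and add: "\<And>p q. p \<in> FA \<Longrightarrow> q \<in> FA \<Longrightarrow> P p \<Longrightarrow> P q \<Longrightarrow> P (fadd p q)"
    and mono: "\<And>c w. set w \<subseteq> {1..4} \<Longrightarrow> P (fsmul c (mono w))"
  shows "P p"
proof -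
  have "P p" if "finite S" "p \<in> FA" "fsupp p \<subseteq> S" for S p
    using that
  proof (induction S arbitrary: p rule: finite_induct)
    case empty
    then have "p = fzero"
      by (auto simp: fsupp_def fa_apply)
    then show ?case
      using zero by (simp only:)
  next
    case (insert x S)
    define m where "m = fsmul (p x) (mono x)"
    define p' where "p' = p(x := 0)"
    have p': "p' \<in> FA" "fsupp p' \<subseteq> S"
      using insert.prems by (auto simp: fsupp_def p'_def split: if_splits elim!: FA_fsupp_subset)
    have m: "m \<in> FA \<and> P m"
    proof (cases "p x = 0")
      case False
      then have "set x \<subseteq> {1..4}"
        using insert.prems by (auto simp: FA_iff fsupp_def)
      then show ?thesis
        by (simp add: m_def mono FA_mono)
    qed (simp add: m_def zero)
    have "p = fadd m p'"
      by (rule ext) (simp add: fa_apply m_def p'_def)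
    then show ?case
      using add m p' insert.IH by metis
  qed
  then show ?thesis
    using assms(1) by (auto simp: FA_iff)
qed

definition fsum :: "'a set \<Rightarrow> ('a \<Rightarrow> fa) \<Rightarrow> fa" where
  "fsum I f = (\<lambda>w. \<Sum>i\<in>I. f i w)"

lemma fsum_apply [simp]: "fsum I f w = (\<Sum>i\<in>I. f i w)"
  by (simp add: fsum_def)

lemma fsum_empty [simp]: "fsum {} f = fzero"
  and fsum_insert [simp]: "finite I \<Longrightarrow> i \<notin> I \<Longrightarrow> fsum (insert i I) f = fadd (f i) (fsum I f)"
  by (rule ext; simp add: fa_apply)+

lemma fsum_cong: "(\<And>i. i \<in> I \<Longrightarrow> f i = g i) \<Longrightarrow> fsum I f = fsum I g"
  by (rule ext) simp

lemma FA_fsum [intro]: "finite I \<Longrightarrow> (\<And>i. i \<in> I \<Longrightarrow> f i \<in> FA) \<Longrightarrow> fsum I f \<in> FA"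
  by (induction I rule: finite_induct) auto

lemma fmul_fsum_left: "fmul (fsum I f) q = fsum I (\<lambda>i. fmul (f i) q)"
  and fmul_fsum_right: "fmul p (fsum I f) = fsum I (\<lambda>i. fmul p (f i))"
  by (rule ext; simp add: fmul_def sum_distrib_left sum_distrib_right mult_ac; rule sum.swap)+

lemma fsub_fsum: "fsub (fsum I f) (fsum I g) = fsum I (\<lambda>i. fsub (f i) (g i))"
  by (rule ext) (simp add: fa_apply sum_subtractf)

lemma atLeastAtMost_1_4: "{1..4::nat} = {1, 2, 3, 4}"
  by auto

lemma fsum_atLeastAtMost_1_4: "fsum {1..4::nat} f = fadd (f 1) (fadd (f 2) (fadd (f 3) (f 4)))"
  unfolding atLeastAtMost_1_4 by simp

abbreviation twist_factor :: "real \<Rightarrow> nat \<Rightarrow> nat list \<Rightarrow> complex" where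
  "twist_factor \<theta> i w \<equiv> prod_list (map (\<lambda>j. Rm \<theta> j i) w)"

lemma twist_apply: "twist \<theta> i p w = twist_factor \<theta> i w * p w"
  by (simp add: twist_def)

lemma twist_fmul: "twist \<theta> i (fmul p q) = fmul (twist \<theta> i p) (twist \<theta> i q)"
proof (rule ext)
  fix w
  have "twist_factor \<theta> i w = twist_factor \<theta> i (take k w) * twist_factor \<theta> i (drop k w)" for k
    by (metis append_take_drop_id map_append prod_list.append)
  then show "twist \<theta> i (fmul p q) w = fmul (twist \<theta> i p) (twist \<theta> i q) w"
    by (simp add: twist_apply fmul_def sum_distrib_left mult_ac)
qed

lemma twist_linear [simp]:
  "twist \<theta> i (fadd p q) = fadd (twist \<theta> i p) (twist \<theta> i q)"
  "twist \<theta> i (fsub p q) = fsub (twist \<theta> i p) (twist \<theta> i q)"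
  "twist \<theta> i (fsmul c p) = fsmul c (twist \<theta> i p)"
  "twist \<theta> i fzero = fzero"
  by (rule ext; simp add: twist_apply ring_distribs mult_ac fa_apply)+

lemma twist_mono: "twist \<theta> i (mono w) = fsmul (twist_factor \<theta> i w) (mono w)"
  by (rule ext) (simp add: fa_apply twist_apply)

lemma twist_fone [simp]: "twist \<theta> i fone = fone"
  by (simp add: fone_def twist_mono)

lemma twist_zg: "twist \<theta> i (zg k) = fsmul (Rm \<theta> k i) (zg k)"
  by (simp add: zg_def twist_mono)

lemma twist_twist_cancel:
  assumes "p \<in> FA" and "\<And>k. k \<in> {1..4} \<Longrightarrow> Rm \<theta> k i * Rm \<theta> k j = 1"
  shows "twist \<theta> i (twist \<theta> j p) = p"
proof (rule ext)
  fix w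
  show "twist \<theta> i (twist \<theta> j p) w = p w"
  proof (cases "p w = 0")
    case False
    then have "set w \<subseteq> {1..4}"
      using assms(1) by (auto simp: FA_def)
    then have "twist_factor \<theta> i w * twist_factor \<theta> j w = 1"
      using assms(2) by (induction w) (auto simp: mult_ac)
    then show ?thesis
      by (simp add: twist_apply mult.assoc[symmetric])
  qed (simp add: twist_apply)
qed

section \<open>One-forms and the derivative\<close>

lemma om_apply:
  "oadd x y i = fadd (x i) (y i)" "osub x y i = fsub (x i) (y i)"
  "olmul a x i = fmul a (x i)" "ormul \<theta> x a i = fmul (x i) (twist \<theta> i a)"
  "dz k i = (if i = k then fone else fzero)"
  by (simp_all add: oadd_def osub_def olmul_def ormul_def dz_def)

lemma ozero_apply: "ozero i = fzero"
  by (simp add: ozero_def)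

lemma FA4I:
  assumes "\<And>i. i \<in> {1..4} \<Longrightarrow> \<omega> i \<in> FA" and "\<And>i. i \<notin> {1..4} \<Longrightarrow> \<omega> i = fzero"
  shows "\<omega> \<in> FA4"
proof -
  have "\<omega> i \<in> FA" for i
    using assms by (cases "i \<in> {1..4}") simp_all
  then show ?thesis
    using assms(2) by (simp add: FA4_def)
qed

lemma FA4D: "\<omega> \<in> FA4 \<Longrightarrow> \<omega> i \<in> FA" "\<omega> \<in> FA4 \<Longrightarrow> i \<notin> {1..4} \<Longrightarrow> \<omega> i = fzero"
  unfolding FA4_def by auto

lemma FA4_closed [intro, simp]:
  "ozero \<in> FA4"
  "k \<in> {1..4} \<Longrightarrow> dz k \<in> FA4"
  "x \<in> FA4 \<Longrightarrow> y \<in> FA4 \<Longrightarrow> oadd x y \<in> FA4"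
  "x \<in> FA4 \<Longrightarrow> y \<in> FA4 \<Longrightarrow> osub x y \<in> FA4"
  "a \<in> FA \<Longrightarrow> x \<in> FA4 \<Longrightarrow> olmul a x \<in> FA4"
  "a \<in> FA \<Longrightarrow> x \<in> FA4 \<Longrightarrow> ormul \<theta> x a \<in> FA4"
  by (rule FA4I; auto simp: om_apply FA4D ozero_apply)+

definition insert_at :: "nat \<Rightarrow> nat \<Rightarrow> nat list \<Rightarrow> nat list" where
  "insert_at k i v = take k v @ [i] @ drop k v"

lemma dA_apply:
  "i \<in> {1..4} \<Longrightarrow> dA \<theta> p i v = (\<Sum>k\<le>length v. p (insert_at k i v) * twist_factor \<theta> i (drop k v))"
  by (simp add: dA_def insert_at_def)

lemma dA_outside: "i \<notin> {1..4} \<Longrightarrow> dA \<theta> p i = fzero"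
  unfolding dA_def by (simp only: if_False)

lemma take_insert_at_le: "m \<le> k \<Longrightarrow> k \<le> length v \<Longrightarrow> take m (insert_at k i v) = take m v"
  and drop_insert_at_le: "m \<le> k \<Longrightarrow> k \<le> length v \<Longrightarrow> drop m (insert_at k i v) = insert_at (k - m) i (drop m v)"
  and take_Suc_insert_at_ge: "k \<le> m \<Longrightarrow> m \<le> length v \<Longrightarrow> take (Suc m) (insert_at k i v) = insert_at k i (take m v)"
  and drop_Suc_insert_at_ge: "k \<le> m \<Longrightarrow> m \<le> length v \<Longrightarrow> drop (Suc m) (insert_at k i v) = drop m v"
  by (simp_all add: insert_at_def drop_take min_def Suc_diff_le)

lemma twist_factor_drop_split:
  assumes "k \<le> m"
  shows "twist_factor \<theta> i (drop k v) = twist_factor \<theta> i (drop k (take m v)) * twist_factor \<theta> i (drop m v)"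
proof -
  have "drop k v = drop k (take m v @ drop m v)"
    by simp
  also have "\<dots> = drop k (take m v) @ drop m v"
    unfolding drop_append using assms by (cases "length v \<le> m") (simp_all add: min_def)
  finally show ?thesis
    by (metis map_append prod_list.append)
qed

text \<open>The terms of \<open>d(ab)\<close> in which the inserted letter falls into \<open>b\<close> form the sum over
  \<open>m \<le> k\<close>, those in which it falls into \<open>a\<close> the sum over \<open>m \<ge> k\<close>.\<close>

lemma dA_fmul_split:
  assumes "i \<in> {1..4}"
  shows "dA \<theta> (fmul a b) i v =
    (\<Sum>k\<le>length v. \<Sum>m\<le>k. a (take m v) * b (insert_at (k - m) i (drop m v)) * twist_factor \<theta> i (drop k v)) +
    (\<Sum>k\<le>length v. \<Sum>m\<in>{k..length v}. a (insert_at k i (take m v)) * b (drop m v) * twist_factor \<theta> i (drop k v))"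
proof -
  have "dA \<theta> (fmul a b) i v = (\<Sum>k\<le>length v. \<Sum>m\<le>Suc (length v).
      a (take m (insert_at k i v)) * b (drop m (insert_at k i v)) * twist_factor \<theta> i (drop k v))"
    unfolding dA_apply[OF assms] fmul_def
    by (intro sum.cong refl) (simp add: insert_at_def sum_distrib_right del: sum.atMost_Suc)
  also have "\<dots> = (\<Sum>k\<le>length v.
      (\<Sum>m\<le>k. a (take m v) * b (insert_at (k - m) i (drop m v)) * twist_factor \<theta> i (drop k v)) +
      (\<Sum>m\<in>{k..length v}. a (insert_at k i (take m v)) * b (drop m v) * twist_factor \<theta> i (drop k v)))"
    by (intro sum.cong refl, simp only: atMost_iff sum_atMost_Suc_split)
      (auto simp: take_insert_at_le drop_insert_at_le take_Suc_insert_at_ge drop_Suc_insert_at_ge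
        intro!: arg_cong2[where f = "(+)"] sum.cong)
  finally show ?thesis
    by (simp add: sum.distrib)
qed

lemma dA_fmul_right_part:
  assumes "i \<in> {1..4}"
  shows "(\<Sum>k\<le>length v. \<Sum>m\<le>k. a (take m v) * b (insert_at (k - m) i (drop m v)) * twist_factor \<theta> i (drop k v))
    = fmul a (dA \<theta> b i) v"
proof -
  define g where "g m j = a (take m v) * b (insert_at j i (drop m v)) * twist_factor \<theta> i (drop (m + j) v)" for m j
  have "(\<Sum>k\<le>length v. \<Sum>m\<le>k. a (take m v) * b (insert_at (k - m) i (drop m v)) * twist_factor \<theta> i (drop k v))
      = (\<Sum>k\<le>length v. \<Sum>m\<le>k. g m (k - m))"
    by (intro sum.cong refl) (simp add: g_def)
  also have "\<dots> = (\<Sum>m\<le>length v. \<Sum>j\<le>length v - m. g m j)"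
    by (rule sum_atMost_triangle)
  also have "\<dots> = fmul a (dA \<theta> b i) v"
    unfolding fmul_def dA_apply[OF assms]
    by (intro sum.cong refl) (simp add: sum_distrib_left g_def mult.assoc add.commute)
  finally show ?thesis .
qed

lemma dA_fmul_left_part:
  assumes "i \<in> {1..4}"
  shows "(\<Sum>k\<le>length v. \<Sum>m\<in>{k..length v}. a (insert_at k i (take m v)) * b (drop m v) * twist_factor \<theta> i (drop k v))
    = fmul (dA \<theta> a i) (twist \<theta> i b) v"
proof -
  define g where "g k m = a (insert_at k i (take m v)) * b (drop m v) * twist_factor \<theta> i (drop k v)" for k m
  have "(\<Sum>k\<le>length v. \<Sum>m\<in>{k..length v}. g k m) = (\<Sum>m\<le>length v. \<Sum>k\<le>m. g k m)"
    by (rule sum_atMost_atLeastAtMost_swap)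
  also have "\<dots> = fmul (dA \<theta> a i) (twist \<theta> i b) v"
    unfolding fmul_def dA_apply[OF assms] twist_apply
  proof (intro sum.cong refl)
    fix m assume "m \<in> {..length v}"
    then have "g k m = a (insert_at k i (take m v)) * twist_factor \<theta> i (drop k (take m v))
        * (twist_factor \<theta> i (drop m v) * b (drop m v))" if "k \<le> m" for k
      using twist_factor_drop_split[OF that, of \<theta> i v] by (simp add: g_def mult_ac)
    then show "(\<Sum>k\<le>m. g k m) = (\<Sum>k\<le>length (take m v). a (insert_at k i (take m v))
        * twist_factor \<theta> i (drop k (take m v))) * (twist_factor \<theta> i (drop m v) * b (drop m v))"
      using \<open>m \<in> {..length v}\<close> by (simp add: sum_distrib_right)
  qed
  finally show ?thesis
    by (simp add: g_def)
qed

lemma dA_fmul: "dA \<theta> (fmul a b) = oadd (olmul a (dA \<theta> b)) (ormul \<theta> (dA \<theta> a) b)"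
proof (intro ext)
  fix i v
  show "dA \<theta> (fmul a b) i v = oadd (olmul a (dA \<theta> b)) (ormul \<theta> (dA \<theta> a) b) i v"
    by (cases "i \<in> {1..4}")
      (simp_all add: fa_apply dA_fmul_split dA_fmul_right_part dA_fmul_left_part dA_outside
        oadd_def olmul_def ormul_def)
qed

lemma dA_linear:
  "dA \<theta> fzero = ozero"
  "dA \<theta> (fadd p q) = oadd (dA \<theta> p) (dA \<theta> q)"
  "dA \<theta> (fsub p q) = osub (dA \<theta> p) (dA \<theta> q)"
  "dA \<theta> (fsmul c p) i = fsmul c (dA \<theta> p i)"
  unfolding dA_def ozero_def oadd_def osub_def
  by (intro ext; simp add: fa_apply ring_distribs sum.distrib sum_subtractf sum_distrib_left mult.assoc)+

lemma dA_fone: "dA \<theta> fone = ozero"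
  unfolding dA_def ozero_def by (intro ext) (simp add: fa_apply fone_def)

lemma dA_zg: "k \<in> {1..4} \<Longrightarrow> dA \<theta> (zg k) = dz k"
proof (intro ext)
  fix i v assume k: "k \<in> {1..4}"
  show "dA \<theta> (zg k) i v = dz k i v"
  proof (cases "i \<in> {1..4}")
    case True
    have "insert_at j i v = [k] \<longleftrightarrow> j = 0 \<and> v = [] \<and> i = k" if "j \<le> length v" for j
      using that by (cases v) (auto simp: insert_at_def Cons_eq_append_conv dest: arg_cong[of _ _ length])
    then have "dA \<theta> (zg k) i v = (\<Sum>j\<le>length v. if j = 0 \<and> v = [] \<and> i = k then 1 else 0)"
      unfolding dA_apply[OF True] zg_def by (intro sum.cong) (auto simp: fa_apply)
    then show ?thesis
      by (auto simp: om_apply fone_def fa_apply)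
  qed (use k in \<open>auto simp: om_apply dA_outside\<close>)
qed

lemma FA4_dA [intro, simp]: "p \<in> FA \<Longrightarrow> dA \<theta> p \<in> FA4"
proof (induction rule: FA_induct)
  case (mono c w)
  have "dA \<theta> (mono w) \<in> FA4"
    using mono
  proof (induction w)
    case Nil
    then show ?case
      by (simp add: dA_fone fone_def[symmetric])
  next
    case (Cons k w)
    then have "dA \<theta> (fmul (zg k) (mono w)) \<in> FA4"
      by (auto simp: dA_fmul dA_zg FA_mono)
    then show ?case
      by (simp add: zg_def fmul_mono_mono)
  qed
  then show ?case
    by (auto intro!: FA4I simp: dA_linear FA4D dA_outside)
qed (simp_all add: dA_linear)

lemma ideal_gen_fsmul: "p \<in> ideal_gen G \<Longrightarrow> fsmul c p \<in> ideal_gen G"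
  using ideal_gen.lmul[of p G "fsmul c fone"] by (simp add: fmul_fsmul_left)

lemma ideal_gen_fsub:
  assumes "p \<in> ideal_gen G" and "q \<in> ideal_gen G"
  shows "fsub p q \<in> ideal_gen G"
proof -
  have "fsub p q = fadd p (fsmul (-1) q)"
    by (rule ext) (simp add: fa_apply)
  then show ?thesis
    using assms by (simp add: ideal_gen.add ideal_gen_fsmul)
qed

lemma ideal_gen_fsum: "finite I \<Longrightarrow> (\<And>i. i \<in> I \<Longrightarrow> f i \<in> ideal_gen G) \<Longrightarrow> fsum I f \<in> ideal_gen G"
  by (induction I rule: finite_induct) (simp_all add: ideal_gen.zero ideal_gen.add)

lemma ideal_gen_mono: "p \<in> ideal_gen G \<Longrightarrow> G \<subseteq> G' \<Longrightarrow> p \<in> ideal_gen G'"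
  by (induction rule: ideal_gen.induct) (auto intro: ideal_gen.intros)

lemma ideal_gen_subset_FA: "p \<in> ideal_gen G \<Longrightarrow> G \<subseteq> FA \<Longrightarrow> p \<in> FA"
  by (induction rule: ideal_gen.induct) auto

text \<open>Congruence modulo a generated ideal is written \<open>fsub x y \<in> ideal_gen G\<close>.\<close>

lemma ideal_gen_cong_refl: "x = y \<Longrightarrow> fsub x y \<in> ideal_gen G"
  by (simp add: ideal_gen.zero)

lemma ideal_gen_cong_sym:
  assumes "fsub x y \<in> ideal_gen G"
  shows "fsub y x \<in> ideal_gen G"
proof -
  have "fsub y x = fsmul (-1) (fsub x y)"
    by (rule ext) (simp add: fa_apply)
  then show ?thesis
    using assms by (simp add: ideal_gen_fsmul)
qed

lemma ideal_gen_cong_trans: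
  assumes "fsub x y \<in> ideal_gen G" and "fsub y z \<in> ideal_gen G"
  shows "fsub x z \<in> ideal_gen G"
proof -
  have "fsub x z = fadd (fsub x y) (fsub y z)"
    by (rule ext) (simp add: fa_apply)
  then show ?thesis
    using assms by (simp add: ideal_gen.add)
qed

lemma ideal_gen_cong_fadd:
  assumes "fsub x y \<in> ideal_gen G" and "fsub x' y' \<in> ideal_gen G"
  shows "fsub (fadd x x') (fadd y y') \<in> ideal_gen G"
proof -
  have "fsub (fadd x x') (fadd y y') = fadd (fsub x y) (fsub x' y')"
    by (rule ext) (simp add: fa_apply)
  then show ?thesis
    using assms by (simp add: ideal_gen.add)
qed

lemma ideal_gen_cong_fsub:
  assumes "fsub x y \<in> ideal_gen G" and "fsub x' y' \<in> ideal_gen G"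
  shows "fsub (fsub x x') (fsub y y') \<in> ideal_gen G"
proof -
  have "fsub (fsub x x') (fsub y y') = fsub (fsub x y) (fsub x' y')"
    by (rule ext) (simp add: fa_apply)
  then show ?thesis
    using assms by (simp add: ideal_gen_fsub)
qed

lemma ideal_gen_cong_fsmul:
  assumes "fsub x y \<in> ideal_gen G"
  shows "fsub (fsmul c x) (fsmul c y) \<in> ideal_gen G"
proof -
  have "fsub (fsmul c x) (fsmul c y) = fsmul c (fsub x y)"
    by (rule ext) (simp add: fa_apply ring_distribs)
  then show ?thesis
    using assms by (simp add: ideal_gen_fsmul)
qed

lemma ideal_gen_cong_fmul_left: "fsub x y \<in> ideal_gen G \<Longrightarrow> a \<in> FA \<Longrightarrow> fsub (fmul a x) (fmul a y) \<in> ideal_gen G"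
  and ideal_gen_cong_fmul_right: "fsub x y \<in> ideal_gen G \<Longrightarrow> a \<in> FA \<Longrightarrow> fsub (fmul x a) (fmul y a) \<in> ideal_gen G"
  by (simp_all add: fmul_fsub_right[symmetric] fmul_fsub_left[symmetric] ideal_gen.lmul ideal_gen.rmul)

lemma ideal_gen_cong_fsum:
  "finite I \<Longrightarrow> (\<And>i. i \<in> I \<Longrightarrow> fsub (f i) (g i) \<in> ideal_gen G) \<Longrightarrow> fsub (fsum I f) (fsum I g) \<in> ideal_gen G"
  by (simp add: fsub_fsum ideal_gen_fsum)

lemma ideal_gen_cong_mem:
  assumes "fsub x y \<in> ideal_gen G" and "y \<in> ideal_gen G"
  shows "x \<in> ideal_gen G"
proof -
  have "x = fadd (fsub x y) y"
    by (rule ext) (simp add: fa_apply)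
  then show ?thesis
    using assms by (metis ideal_gen.add)
qed

lemma bimod_gen_osub:
  assumes "x \<in> bimod_gen \<theta> S" and "y \<in> bimod_gen \<theta> S"
  shows "osub x y \<in> bimod_gen \<theta> S"
proof -
  have "osub x y = oadd x (olmul (fsmul (-1) fone) y)"
    by (intro ext) (simp add: om_apply fa_apply fmul_fsmul_left)
  then show ?thesis
    using assms by (simp add: bimod_gen.add bimod_gen.lmul)
qed

lemma bimod_gen_osub_sym:
  assumes "osub x y \<in> bimod_gen \<theta> S"
  shows "osub y x \<in> bimod_gen \<theta> S"
proof -
  have "osub y x = osub ozero (osub x y)"
    by (intro ext) (simp add: om_apply fa_apply ozero_apply)
  then show ?thesis
    using assms by (simp add: bimod_gen_osub bimod_gen.zero)
qed

lemma Rm_values [simp]: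
  "Rm \<theta> 1 1 = 1" "Rm \<theta> 1 2 = cis (-\<theta>)" "Rm \<theta> 1 3 = 1" "Rm \<theta> 1 4 = cis \<theta>"
  "Rm \<theta> 2 1 = cis \<theta>" "Rm \<theta> 2 2 = 1" "Rm \<theta> 2 3 = cis (-\<theta>)" "Rm \<theta> 2 4 = 1"
  "Rm \<theta> 3 1 = 1" "Rm \<theta> 3 2 = cis \<theta>" "Rm \<theta> 3 3 = 1" "Rm \<theta> 3 4 = cis (-\<theta>)"
  "Rm \<theta> 4 1 = cis (-\<theta>)" "Rm \<theta> 4 2 = 1" "Rm \<theta> 4 3 = cis \<theta>" "Rm \<theta> 4 4 = 1"
  by (simp_all add: Rm_def numeral_eq_Suc)

text \<open>The simplifier rewrites \<open>1 :: nat\<close> to \<open>Suc 0\<close>, hence these copies (likewise below).\<close>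

lemmas Rm_values_Suc_0 [simp] = Rm_values(1-5,9,13)[unfolded One_nat_def]

lemma Rm_mult_transpose: "a \<in> {1..4} \<Longrightarrow> b \<in> {1..4} \<Longrightarrow> Rm \<theta> a b * Rm \<theta> b a = 1"
  unfolding atLeastAtMost_1_4 by (auto simp: cis_mult)

lemma relsA_memI:
  "i \<in> {1..4} \<Longrightarrow> j \<in> {1..4} \<Longrightarrow>
    fsub (fmul (zg i) (zg j)) (fsmul (Rm \<theta> j i) (fmul (zg j) (zg i))) \<in> relsA \<theta>"
  unfolding relsA_def by blast

text \<open>In \<open>A\<close>, moving \<open>z\<^sup>i\<close> to the right of \<open>a\<close> twists \<open>a\<close>, just as for \<open>dz\<^sup>i\<close> in \<open>\<Omega>\<^sup>1\<close>.\<close>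

lemma zg_fmul_commute:
  assumes G: "relsA \<theta> \<subseteq> G" and i: "i \<in> {1..4}" and a: "a \<in> FA"
  shows "fsub (fmul (zg i) a) (fmul (twist \<theta> i a) (zg i)) \<in> ideal_gen G"
  using a
proof (induction rule: FA_induct)
  case zero
  then show ?case
    by (simp add: ideal_gen.zero)
next
  case (add p q)
  then show ?case
    by (simp add: fmul_fadd_left fmul_fadd_right ideal_gen_cong_fadd)
next
  case (mono c w)
  have "fsub (fmul (zg i) (mono w)) (fmul (twist \<theta> i (mono w)) (zg i)) \<in> ideal_gen G"
    using mono
  proof (induction w)
    case Nil
    then show ?case
      by (simp add: fone_def[symmetric] ideal_gen.zero)
  next
    case (Cons k w)
    let ?m = "mono w" and ?r = "Rm \<theta> k i"
    have k: "k \<in> {1..4}" and w: "set w \<subseteq> {1..4}"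
      using Cons.prems by auto
    have mono_Cons: "mono (k # w) = fmul (zg k) ?m"
      by (simp add: zg_def fmul_mono_mono)
    have "fsub (fmul (fmul (zg i) (zg k)) ?m) (fmul (fsmul ?r (fmul (zg k) (zg i))) ?m) \<in> ideal_gen G"
      unfolding fmul_fsub_left[symmetric]
      using relsA_memI[OF i k, of \<theta>] G w by (blast intro: ideal_gen.rmul ideal_gen.gen FA_mono)
    moreover have "fsub (fmul (fsmul ?r (zg k)) (fmul (zg i) ?m))
        (fmul (fsmul ?r (zg k)) (fmul (twist \<theta> i ?m) (zg i))) \<in> ideal_gen G"
      using Cons.IH[OF w] k by (auto intro: ideal_gen_cong_fmul_left)
    ultimately have "fsub (fmul (zg i) (fmul (zg k) ?m))
        (fmul (fsmul ?r (zg k)) (fmul (twist \<theta> i ?m) (zg i))) \<in> ideal_gen G"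
      by (auto simp: fmul_assoc fmul_fsmul_left intro: ideal_gen_cong_trans)
    then show ?case
      by (simp add: mono_Cons twist_fmul twist_zg fmul_assoc)
  qed
  then show ?case
    by (simp add: fmul_fsmul_left fmul_fsmul_right ideal_gen_cong_fsmul)
qed

lemma relsA_subset_JB_gens: "relsA \<theta> \<subseteq> relsA \<theta> \<union> {fS}"
  and relsA_subset_JC_gens: "relsA \<theta> \<subseteq> relsA \<theta> \<union> {fS, ftil}"
  by auto

lemmas zg_fmul_commute_JB = zg_fmul_commute[OF relsA_subset_JB_gens, folded JB_def]

lemma JB_subset_JC: "p \<in> JB \<theta> \<Longrightarrow> p \<in> JC \<theta>"
  unfolding JB_def JC_def by (erule ideal_gen_mono) auto

lemma ftil_JC: "ftil \<in> JC \<theta>"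
  by (simp add: JC_def ideal_gen.gen)

lemma ftil_eq:
  "ftil = fsmul (1/4) (fsub (fadd (fmul (zg 1) (zg 3)) (fmul (zg 3) (zg 1)))
                            (fadd (fmul (zg 2) (zg 4)) (fmul (zg 4) (zg 2))))"
  unfolding ftil_def atLeastAtMost_1_4 by (rule ext) (simp add: hlow_def Qm_def fa_apply algebra_simps)

lemma relsA_subset_FA: "relsA \<theta> \<subseteq> FA"
  unfolding relsA_def by auto

lemma fS_FA: "fS \<in> FA"
  and ftil_FA: "ftil \<in> FA"
  by (simp_all add: fS_def ftil_eq)

lemma JC_subset_FA: "p \<in> JC \<theta> \<Longrightarrow> p \<in> FA"
  unfolding JC_def using relsA_subset_FA fS_FA ftil_FA
  by (auto elim!: ideal_gen_subset_FA)

definition partners :: "nat \<Rightarrow> nat \<Rightarrow> bool" where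
  "partners i j \<longleftrightarrow> (i, j) \<in> {(1, 3), (3, 1), (2, 4), (4, 2)}"

lemma partners_Rm: "partners i j \<Longrightarrow> k \<in> {1..4} \<Longrightarrow> Rm \<theta> k i * Rm \<theta> k j = 1"
  unfolding partners_def atLeastAtMost_1_4 by (auto simp: cis_mult)

lemma partners_range: "partners i j \<Longrightarrow> i \<in> {1..4} \<and> j \<in> {1..4}"
  unfolding partners_def by auto

lemma twist_partners_cancel: "partners i j \<Longrightarrow> p \<in> FA \<Longrightarrow> twist \<theta> i (twist \<theta> j p) = p"
  by (rule twist_twist_cancel) (auto intro: partners_Rm)

definition fcomm :: "fa \<Rightarrow> fa \<Rightarrow> fa" where
  "fcomm p x = fsub (fmul p x) (fmul x p)"

lemma fcomm_linear:
  "fcomm p (fadd x y) = fadd (fcomm p x) (fcomm p y)"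
  "fcomm p (fsub x y) = fsub (fcomm p x) (fcomm p y)"
  "fcomm p (fsmul c x) = fsmul c (fcomm p x)"
  unfolding fcomm_def
  by (rule ext; simp add: fa_apply fmul_fadd_left fmul_fadd_right fmul_fsub_left fmul_fsub_right
      fmul_fsmul_left fmul_fsmul_right ring_distribs)+

text \<open>Commuting \<open>p\<close> past \<open>z\<^sup>i z\<^sup>j\<close> applies \<open>twist i \<circ> twist j\<close>, the identity for partners.\<close>

lemma partners_fcomm:
  assumes G: "relsA \<theta> \<subseteq> G" and ij: "partners i j" and p: "p \<in> FA"
  shows "fcomm p (fmul (zg i) (zg j)) \<in> ideal_gen G"
proof -
  have i: "i \<in> {1..4}" and j: "j \<in> {1..4}"
    using partners_range[OF ij] by auto
  have "fsub (fmul (zg i) (fmul (zg j) p)) (fmul (zg i) (fmul (twist \<theta> j p) (zg j))) \<in> ideal_gen G"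
    using zg_fmul_commute[OF G j p] i by (simp add: ideal_gen_cong_fmul_left)
  moreover have "fsub (fmul (fmul (zg i) (twist \<theta> j p)) (zg j))
      (fmul (fmul (twist \<theta> i (twist \<theta> j p)) (zg i)) (zg j)) \<in> ideal_gen G"
    using zg_fmul_commute[OF G i FA_twist[OF p]] j by (simp add: ideal_gen_cong_fmul_right)
  then have "fsub (fmul (zg i) (fmul (twist \<theta> j p) (zg j))) (fmul p (fmul (zg i) (zg j))) \<in> ideal_gen G"
    by (simp add: fmul_assoc twist_partners_cancel[OF ij p])
  ultimately have "fsub (fmul (fmul (zg i) (zg j)) p) (fmul p (fmul (zg i) (zg j))) \<in> ideal_gen G"
    unfolding fmul_assoc by (rule ideal_gen_cong_trans)
  then show ?thesis
    unfolding fcomm_def by (rule ideal_gen_cong_sym)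
qed

lemma ftil_central: "p \<in> FA \<Longrightarrow> fsub (fmul p ftil) (fmul ftil p) \<in> JB \<theta>"
  unfolding fcomm_def[symmetric] ftil_eq fcomm_linear JB_def
  by (intro ideal_gen_fsmul ideal_gen_fsub ideal_gen.add partners_fcomm[OF relsA_subset_JB_gens])
    (simp_all add: partners_def)

lemma dA_zg_zg:
  "i \<in> {1..4} \<Longrightarrow> j \<in> {1..4} \<Longrightarrow>
    dA \<theta> (fmul (zg i) (zg j)) k = fadd (fmul (zg i) (dz j k)) (fmul (dz i k) (fsmul (Rm \<theta> j i) (zg j)))"
  by (simp add: dA_fmul dA_zg om_apply twist_zg)

lemma nu_components:
  "nu \<theta> 1 = fsmul (1/2) (zg 3)" "nu \<theta> 2 = fsmul (-1/2) (zg 4)"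
  "nu \<theta> 3 = fsmul (1/2) (zg 1)" "nu \<theta> 4 = fsmul (-1/2) (zg 2)"
  unfolding nu_def ftil_eq
  by (rule ext; simp add: dA_linear dA_zg_zg om_apply fa_apply fmul_fsmul_right)+

lemmas nu_components_simps = nu_components nu_components(1)[unfolded One_nat_def]

lemma nu_outside: "i \<notin> {1..4} \<Longrightarrow> nu \<theta> i = fzero"
  unfolding nu_def by (rule dA_outside)

lemma nu_FA4: "nu \<theta> \<in> FA4"
  unfolding nu_def by (simp add: ftil_FA)

lemma nu_eq_hlow: "nu \<theta> = (\<lambda>j w. \<Sum>i\<in>{1..4}. hlow i j * zg i w)"
proof (intro ext)
  fix j w
  show "nu \<theta> j w = (\<Sum>i\<in>{1..4}. hlow i j * zg i w)"
  proof (cases "j \<in> {1..4}")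
    case True
    then show ?thesis
      unfolding atLeastAtMost_1_4
      by (auto simp: nu_components_simps hlow_def Qm_def fa_apply zg_def)
  next
    case False
    then show ?thesis
      by (auto simp: nu_outside hlow_def Qm_def fa_apply)
  qed
qed

lemma dA_fS_components:
  "dA \<theta> fS 1 = fsmul (1/2) (zg 3)" "dA \<theta> fS 2 = fsmul (1/2) (zg 4)"
  "dA \<theta> fS 3 = fsmul (1/2) (zg 1)" "dA \<theta> fS 4 = fsmul (1/2) (zg 2)"
  unfolding fS_def
  by (rule ext; simp add: dA_linear dA_fone dA_zg_zg om_apply ozero_apply fmul_fsmul_right)+

lemmas dA_fS_components_simps = dA_fS_components dA_fS_components(1)[unfolded One_nat_def]

lemma dA_relsA: "r \<in> relsA \<theta> \<Longrightarrow> dA \<theta> r = ozero"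
proof -
  assume "r \<in> relsA \<theta>"
  then obtain i j where ij: "i \<in> {1..4}" "j \<in> {1..4}"
    and r: "r = fsub (fmul (zg i) (zg j)) (fsmul (Rm \<theta> j i) (fmul (zg j) (zg i)))"
    unfolding relsA_def by blast
  show "dA \<theta> r = ozero"
  proof (intro ext)
    fix k w
    show "dA \<theta> r k w = ozero k w"
      using Rm_mult_transpose[OF ij(2,1), of \<theta>]
      by (simp add: r dA_linear dA_zg_zg[OF ij] dA_zg_zg[OF ij(2,1)] om_apply ozero_apply fa_apply
          fmul_fsmul_right algebra_simps)
  qed
qed

lemma MB_subset_MC: "x \<in> MB \<theta> \<Longrightarrow> x \<in> MC \<theta>"
  unfolding MC_def by (rule bimod_gen.gen) simp

lemma qrel_JC_MC: "p \<in> JC \<theta> \<Longrightarrow> \<omega> \<in> FA4 \<Longrightarrow> olmul p \<omega> \<in> MC \<theta>"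
  "p \<in> JC \<theta> \<Longrightarrow> \<omega> \<in> FA4 \<Longrightarrow> ormul \<theta> \<omega> p \<in> MC \<theta>"
  unfolding MC_def qrel_def by (rule bimod_gen.gen, blast)+

lemma dA_fS_MB: "dA \<theta> fS \<in> MB \<theta>"
  unfolding MB_def by (rule bimod_gen.gen) simp

lemma bimod_gen_of_components:
  assumes S: "qrel \<theta> J \<subseteq> S"
    and comp: "\<And>j. j \<in> {1..4} \<Longrightarrow> \<omega> j \<in> J" and outside: "\<And>j. j \<notin> {1..4} \<Longrightarrow> \<omega> j = fzero"
  shows "\<omega> \<in> bimod_gen \<theta> S"
proof -
  have \<omega>_eq: "\<omega> = oadd (olmul (\<omega> 1) (dz 1))
      (oadd (olmul (\<omega> 2) (dz 2)) (oadd (olmul (\<omega> 3) (dz 3)) (olmul (\<omega> 4) (dz 4))))"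
    (is "\<omega> = ?sum")
  proof (rule ext)
    fix j
    show "\<omega> j = ?sum j"
    proof (cases "j \<in> {1..4}")
      case True
      then consider "j = 1" | "j = 2" | "j = 3" | "j = 4"
        by fastforce
      then show ?thesis
        by cases (simp_all add: om_apply)
    next
      case False
      then show ?thesis
        using outside[OF False] by (auto simp: om_apply)
    qed
  qed
  have summand: "olmul (\<omega> j) (dz j) \<in> bimod_gen \<theta> S" if "j \<in> {1..4}" for j
  proof -
    have "olmul (\<omega> j) (dz j) \<in> qrel \<theta> J"
      unfolding qrel_def using comp[OF that] FA4_closed(2)[OF that] by blast
    then show ?thesis
      using S by (auto intro: bimod_gen.gen)
  qed
  show ?thesis
    by (subst \<omega>_eq) (intro bimod_gen.add summand; simp)
qed

lemma nu_component_partner: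
  assumes "j \<in> {1..4}"
  obtains c k where "partners k j" and "nu \<theta> j = fsmul c (zg k)"
  using assms unfolding atLeastAtMost_1_4 partners_def
  by (auto simp: nu_components_simps)

lemma nu_central_MB: "p \<in> FA \<Longrightarrow> osub (olmul p (nu \<theta>)) (ormul \<theta> (nu \<theta>) p) \<in> MB \<theta>"
proof -
  assume p: "p \<in> FA"
  have "fsub (fmul p (nu \<theta> j)) (fmul (nu \<theta> j) (twist \<theta> j p)) \<in> JB \<theta>" if j: "j \<in> {1..4}" for j
  proof -
    obtain c k where kj: "partners k j" and nu_j: "nu \<theta> j = fsmul c (zg k)"
      using nu_component_partner[OF j] .
    have "fsub (fmul (zg k) (twist \<theta> j p)) (fmul p (zg k)) \<in> JB \<theta>"
      using zg_fmul_commute_JB[of k "twist \<theta> j p" \<theta>] partners_range[OF kj] p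
      by (simp add: twist_partners_cancel[OF kj p])
    then have "fsub (fmul p (zg k)) (fmul (zg k) (twist \<theta> j p)) \<in> JB \<theta>"
      unfolding JB_def by (rule ideal_gen_cong_sym)
    then show ?thesis
      unfolding JB_def nu_j fmul_fsmul_left fmul_fsmul_right by (rule ideal_gen_cong_fsmul)
  qed
  then show ?thesis
    unfolding MB_def
    by (intro bimod_gen_of_components[where J = "JB \<theta>"]) (auto simp: om_apply nu_outside qrel_def)
qed

definition contract :: "(nat \<Rightarrow> complex) \<Rightarrow> om \<Rightarrow> fa" where
  "contract s \<omega> = fsum {1..4} (\<lambda>i. fsmul (s i) (fmul (\<omega> i) (zg i)))"

lemma contract_FA: "\<omega> \<in> FA4 \<Longrightarrow> contract s \<omega> \<in> FA"
  unfolding contract_def by (auto simp: FA4D)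

lemma contract_linear:
  "contract s ozero = fzero"
  "contract s (oadd x y) = fadd (contract s x) (contract s y)"
  "contract s (olmul a x) = fmul a (contract s x)"
  unfolding contract_def
  by (rule ext; simp add: om_apply ozero_apply fa_apply fmul_fadd_left fmul_fsum_right
      fmul_fsmul_right fmul_assoc sum.distrib ring_distribs)+

lemma contract_ormul_cong:
  assumes G: "relsA \<theta> \<subseteq> G" and \<omega>: "\<omega> \<in> FA4" and a: "a \<in> FA"
  shows "fsub (contract s (ormul \<theta> \<omega> a)) (fmul (contract s \<omega>) a) \<in> ideal_gen G"
proof -
  have "fsub (fmul (fmul (\<omega> i) (twist \<theta> i a)) (zg i)) (fmul (fmul (\<omega> i) (zg i)) a) \<in> ideal_gen G"
    if "i \<in> {1..4}" for i
    using ideal_gen_cong_fmul_left[OF ideal_gen_cong_sym[OF zg_fmul_commute[OF G that a]] FA4D(1)[OF \<omega>]]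
    by (simp add: fmul_assoc)
  then show ?thesis
    unfolding contract_def fmul_fsum_left fmul_fsmul_left om_apply
    by (intro ideal_gen_cong_fsum ideal_gen_cong_fsmul) auto
qed

lemma contract_bimod_gen_JC:
  assumes "x \<in> bimod_gen \<theta> S"
    and gens: "\<And>y. y \<in> S \<Longrightarrow> y \<in> FA4 \<and> contract s y \<in> JC \<theta>"
  shows "x \<in> FA4 \<and> contract s x \<in> JC \<theta>"
  using assms(1)
proof (induction rule: bimod_gen.induct)
  case (rmul x a)
  then have "fsub (contract s (ormul \<theta> x a)) (fmul (contract s x) a) \<in> JC \<theta>"
    and "fmul (contract s x) a \<in> JC \<theta>"
    unfolding JC_def by (auto intro: contract_ormul_cong ideal_gen.rmul)
  with rmul show ?case
    unfolding JC_def by (auto intro: ideal_gen_cong_mem)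
qed (use gens in \<open>auto simp: contract_linear JC_def intro: ideal_gen.intros\<close>)

lemma contract_qrel_JC:
  assumes "x \<in> qrel \<theta> (JC \<theta>)"
  shows "x \<in> FA4 \<and> contract s x \<in> JC \<theta>"
proof -
  obtain p \<omega> where p: "p \<in> JC \<theta>" and \<omega>: "\<omega> \<in> FA4"
    and x: "x = olmul p \<omega> \<or> x = ormul \<theta> \<omega> p"
    using assms unfolding qrel_def by blast
  have pFA: "p \<in> FA"
    using p by (rule JC_subset_FA)
  have "fmul p (contract s \<omega>) \<in> JC \<theta>" and "fmul (contract s \<omega>) p \<in> JC \<theta>"
    using p contract_FA[OF \<omega>] unfolding JC_def by (auto intro: ideal_gen.rmul ideal_gen.lmul)
  moreover have "fsub (contract s (ormul \<theta> \<omega> p)) (fmul (contract s \<omega>) p) \<in> JC \<theta>"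
    unfolding JC_def by (rule contract_ormul_cong[OF relsA_subset_JC_gens \<omega> pFA])
  ultimately show ?thesis
    using x pFA \<omega> unfolding JC_def by (auto simp: contract_linear intro: ideal_gen_cong_mem)
qed

text \<open>\<open>nu_pairing \<omega>\<close> represents \<open>g\<^sub>B\<^sup>-\<^sup>1(\<omega> \<otimes> \<nu>)\<close> in \<open>C\<close> (see \<open>ginv_nu_cong\<close>).\<close>

definition nu_pairing :: "om \<Rightarrow> fa" where
  "nu_pairing = contract (\<lambda>i. - ((-1) ^ i))"

lemma nu_pairing_dA_fS: "nu_pairing (dA \<theta> fS) = fsmul 2 ftil"
  unfolding nu_pairing_def contract_def fsum_atLeastAtMost_1_4 ftil_eq
  by (rule ext) (simp add: dA_fS_components_simps fmul_fsmul_left fa_apply algebra_simps)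

lemma nu_pairing_MC: "x \<in> MC \<theta> \<Longrightarrow> nu_pairing x \<in> JC \<theta>"
proof -
  have MB: "y \<in> FA4 \<and> nu_pairing y \<in> JC \<theta>" if "y \<in> MB \<theta>" for y
    using that unfolding MB_def nu_pairing_def
  proof (rule contract_bimod_gen_JC)
    fix z assume "z \<in> qrel \<theta> (JB \<theta>) \<union> {dA \<theta> fS}"
    moreover have "qrel \<theta> (JB \<theta>) \<subseteq> qrel \<theta> (JC \<theta>)"
      unfolding qrel_def using JB_subset_JC by blast
    moreover have "fsmul 2 ftil \<in> JC \<theta>"
      using ftil_JC unfolding JC_def by (rule ideal_gen_fsmul)
    ultimately show "z \<in> FA4 \<and> contract (\<lambda>i. - ((-1) ^ i)) z \<in> JC \<theta>"
      using contract_qrel_JC fS_FA nu_pairing_dA_fS[unfolded nu_pairing_def] by auto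
  qed
  show "x \<in> MC \<theta> \<Longrightarrow> nu_pairing x \<in> JC \<theta>"
    unfolding MC_def nu_pairing_def
    by (drule contract_bimod_gen_JC) (use MB contract_qrel_JC in \<open>auto simp: nu_pairing_def\<close>)
qed

section \<open>The inverse metric\<close>

definition gup_pairing :: "real \<Rightarrow> om \<Rightarrow> om \<Rightarrow> fa" where
  "gup_pairing \<theta> \<omega> \<eta> = fsum {1..4} (\<lambda>i. fsum {1..4} (\<lambda>j. fsmul (gup i j) (fmul (\<omega> i) (twist \<theta> i (\<eta> j)))))"

text \<open>The inverse metric \<open>g\<^sup>i\<^sup>j - z\<^sup>i z\<^sup>j\<close> splits, modulo the relations of \<open>A\<close>, into the
  constant part and the square of the contraction with \<open>z\<close>.\<close>

lemma ginv_cong: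
  assumes G: "relsA \<theta> \<subseteq> G" and \<omega>: "\<omega> \<in> FA4" and \<eta>: "\<eta> \<in> FA4"
  shows "fsub (ginv \<theta> \<omega> \<eta>) (fsub (gup_pairing \<theta> \<omega> \<eta>) (fmul (contract (\<lambda>_. 1) \<omega>) (contract (\<lambda>_. 1) \<eta>)))
    \<in> ideal_gen G"
proof -
  have ginv_eq: "ginv \<theta> \<omega> \<eta> = fsub (gup_pairing \<theta> \<omega> \<eta>)
      (fsum {1..4} (\<lambda>i. fsum {1..4} (\<lambda>j. fmul (\<omega> i) (fmul (twist \<theta> i (\<eta> j)) (fmul (zg i) (zg j))))))"
    unfolding ginv_def gup_pairing_def
    by (rule ext) (simp add: fa_apply fmul_fsub_right fmul_fsmul_left fmul_fsmul_right sum_subtractf)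
  have product_eq: "fmul (contract (\<lambda>_. 1) \<omega>) (contract (\<lambda>_. 1) \<eta>)
      = fsum {1..4} (\<lambda>i. fsum {1..4} (\<lambda>j. fmul (fmul (\<omega> i) (zg i)) (fmul (\<eta> j) (zg j))))"
    unfolding contract_def fmul_fsum_left by (simp add: fmul_fsum_right)
  have summand_cong: "fsub (fmul (\<omega> i) (fmul (twist \<theta> i (\<eta> j)) (fmul (zg i) (zg j))))
      (fmul (fmul (\<omega> i) (zg i)) (fmul (\<eta> j) (zg j))) \<in> ideal_gen G"
    if "i \<in> {1..4}" "j \<in> {1..4}" for i j
  proof -
    have "fsub (fmul (twist \<theta> i (\<eta> j)) (zg i)) (fmul (zg i) (\<eta> j)) \<in> ideal_gen G"
      using zg_fmul_commute[OF G that(1) FA4D(1)[OF \<eta>]] by (rule ideal_gen_cong_sym)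
    then have "fsub (fmul (\<omega> i) (fmul (fmul (twist \<theta> i (\<eta> j)) (zg i)) (zg j)))
        (fmul (\<omega> i) (fmul (fmul (zg i) (\<eta> j)) (zg j))) \<in> ideal_gen G"
      using that(2) \<omega> by (simp add: ideal_gen_cong_fmul_left ideal_gen_cong_fmul_right FA4D)
    then show ?thesis
      by (simp add: fmul_assoc)
  qed
  show ?thesis
    unfolding ginv_eq product_eq
    by (intro ideal_gen_cong_fsub[OF ideal_gen_cong_refl[OF refl]] ideal_gen_cong_fsum finite_atLeastAtMost
        summand_cong)
qed

lemma gup_pairing_nu: "gup_pairing \<theta> \<omega> (nu \<theta>) = nu_pairing \<omega>"
proof -
  have "fsum {1..4} (\<lambda>j. fsmul (gup i j) (twist \<theta> i (nu \<theta> j))) = fsmul (- ((-1) ^ i)) (zg i)"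
    if "i \<in> {1..4}" for i
    using that unfolding atLeastAtMost_1_4
    by (auto simp: gup_def Pm_def nu_components_simps twist_zg)
  moreover have "fsum {1..4} (\<lambda>j. fsmul (gup i j) (fmul (\<omega> i) (twist \<theta> i (nu \<theta> j))))
      = fmul (\<omega> i) (fsum {1..4} (\<lambda>j. fsmul (gup i j) (twist \<theta> i (nu \<theta> j))))" for i
    by (simp add: fmul_fsum_right fmul_fsmul_right)
  ultimately show ?thesis
    unfolding gup_pairing_def nu_pairing_def contract_def
    by (intro fsum_cong) (simp add: fmul_fsmul_right)
qed

lemma contract_one_nu: "contract (\<lambda>_. 1) (nu \<theta>) = fsmul 2 ftil"
  unfolding contract_def fsum_atLeastAtMost_1_4 ftil_eq
  by (rule ext) (simp add: nu_components_simps fmul_fsmul_left fa_apply algebra_simps)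

lemma ginv_nu_cong: "\<omega> \<in> FA4 \<Longrightarrow> fsub (ginv \<theta> \<omega> (nu \<theta>)) (nu_pairing \<omega>) \<in> JC \<theta>"
proof -
  assume \<omega>: "\<omega> \<in> FA4"
  have "fsub (ginv \<theta> \<omega> (nu \<theta>)) (fsub (nu_pairing \<omega>) (fmul (contract (\<lambda>_. 1) \<omega>) (fsmul 2 ftil))) \<in> JC \<theta>"
    using ginv_cong[OF relsA_subset_JC_gens[of \<theta>] \<omega> nu_FA4[of \<theta>]] unfolding JC_def gup_pairing_nu contract_one_nu .
  moreover have "fmul (contract (\<lambda>_. 1) \<omega>) (fsmul 2 ftil) \<in> JC \<theta>"
    using ftil_JC contract_FA[OF \<omega>] unfolding JC_def by (auto intro: ideal_gen.lmul ideal_gen_fsmul)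
  moreover have "fsub (ginv \<theta> \<omega> (nu \<theta>)) (nu_pairing \<omega>)
      = fsub (fsub (ginv \<theta> \<omega> (nu \<theta>)) (fsub (nu_pairing \<omega>) (fmul (contract (\<lambda>_. 1) \<omega>) (fsmul 2 ftil))))
          (fmul (contract (\<lambda>_. 1) \<omega>) (fsmul 2 ftil))"
    by (rule ext) (simp add: fa_apply)
  ultimately show ?thesis
    unfolding JC_def by (simp add: ideal_gen_fsub)
qed

lemma nu_pairing_nu: "fsub (nu_pairing (nu \<theta>)) fone \<in> JB \<theta>"
proof -
  let ?r31 = "fsub (fmul (zg 3) (zg 1)) (fsmul (Rm \<theta> 1 3) (fmul (zg 1) (zg 3)))"
    and ?r42 = "fsub (fmul (zg 4) (zg 2)) (fsmul (Rm \<theta> 2 4) (fmul (zg 2) (zg 4)))"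
  have "fsub (nu_pairing (nu \<theta>)) fone = fadd (fsmul 2 fS) (fadd (fsmul (1/2) ?r31) (fsmul (1/2) ?r42))"
    unfolding nu_pairing_def contract_def fsum_atLeastAtMost_1_4 fS_def
    by (rule ext) (simp add: nu_components_simps fmul_fsmul_left fa_apply algebra_simps)
  moreover have "?r31 \<in> relsA \<theta>" "?r42 \<in> relsA \<theta>"
    by (intro relsA_memI; simp)+
  ultimately show ?thesis
    unfolding JB_def by (simp add: ideal_gen.add ideal_gen_fsmul ideal_gen.gen)
qed

lemma ginv_nu_nu: "fsub (ginv \<theta> (nu \<theta>) (nu \<theta>)) fone \<in> JC \<theta>"
proof -
  have "fsub (ginv \<theta> (nu \<theta>) (nu \<theta>)) (nu_pairing (nu \<theta>)) \<in> JC \<theta>"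
    by (rule ginv_nu_cong[OF nu_FA4])
  moreover have "fsub (nu_pairing (nu \<theta>)) fone \<in> JC \<theta>"
    by (rule JB_subset_JC[OF nu_pairing_nu])
  ultimately show ?thesis
    unfolding JC_def by (rule ideal_gen_cong_trans)
qed

lemma nu_pairing_dz: "i \<in> {1..4} \<Longrightarrow> nu_pairing (dz i) = fsmul (- ((-1) ^ i)) (zg i)"
  unfolding nu_pairing_def contract_def atLeastAtMost_1_4
  by (auto simp: om_apply)

section \<open>The conormal module\<close>

lemma MC_closed:
  "ozero \<in> MC \<theta>"
  "x \<in> MC \<theta> \<Longrightarrow> y \<in> MC \<theta> \<Longrightarrow> oadd x y \<in> MC \<theta>"
  "x \<in> MC \<theta> \<Longrightarrow> a \<in> FA \<Longrightarrow> olmul a x \<in> MC \<theta>"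
  "x \<in> MC \<theta> \<Longrightarrow> a \<in> FA \<Longrightarrow> ormul \<theta> x a \<in> MC \<theta>"
  unfolding MC_def by (simp_all add: bimod_gen.intros)

definition in_nu_span :: "real \<Rightarrow> om \<Rightarrow> bool" where
  "in_nu_span \<theta> x \<longleftrightarrow> (\<exists>c\<in>FA. osub x (olmul c (nu \<theta>)) \<in> MC \<theta>)"

lemma in_nu_span_MC: "x \<in> MC \<theta> \<Longrightarrow> in_nu_span \<theta> x"
proof -
  have "osub x (olmul fzero (nu \<theta>)) = x"
    by (intro ext) (simp add: om_apply)
  then show "x \<in> MC \<theta> \<Longrightarrow> in_nu_span \<theta> x"
    unfolding in_nu_span_def by (metis FA_fzero)
qed

lemma in_nu_span_nu: "in_nu_span \<theta> (nu \<theta>)"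
proof -
  have "osub (nu \<theta>) (olmul fone (nu \<theta>)) = ozero"
    by (intro ext) (simp add: om_apply ozero_apply)
  then show ?thesis
    unfolding in_nu_span_def using MC_closed(1) FA_fone by metis
qed

lemma in_nu_span_oadd: "in_nu_span \<theta> x \<Longrightarrow> in_nu_span \<theta> y \<Longrightarrow> in_nu_span \<theta> (oadd x y)"
proof -
  assume "in_nu_span \<theta> x" "in_nu_span \<theta> y"
  then obtain c d where "c \<in> FA" "osub x (olmul c (nu \<theta>)) \<in> MC \<theta>"
    and "d \<in> FA" "osub y (olmul d (nu \<theta>)) \<in> MC \<theta>"
    unfolding in_nu_span_def by blast
  moreover have "osub (oadd x y) (olmul (fadd c d) (nu \<theta>))
      = oadd (osub x (olmul c (nu \<theta>))) (osub y (olmul d (nu \<theta>)))"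
    by (intro ext) (simp add: om_apply fa_apply fmul_fadd_left)
  ultimately show ?thesis
    unfolding in_nu_span_def by (metis FA_fadd MC_closed(2))
qed

lemma in_nu_span_olmul: "in_nu_span \<theta> x \<Longrightarrow> a \<in> FA \<Longrightarrow> in_nu_span \<theta> (olmul a x)"
proof -
  assume "in_nu_span \<theta> x" and a: "a \<in> FA"
  then obtain c where "c \<in> FA" "osub x (olmul c (nu \<theta>)) \<in> MC \<theta>"
    unfolding in_nu_span_def by blast
  moreover have "osub (olmul a x) (olmul (fmul a c) (nu \<theta>)) = olmul a (osub x (olmul c (nu \<theta>)))"
    by (intro ext) (simp add: om_apply fmul_fsub_right fmul_assoc)
  ultimately show ?thesis
    unfolding in_nu_span_def using a by (metis FA_fmul MC_closed(3))
qed

text \<open>Right multiples of \<open>\<nu>\<close> are left multiples because \<open>\<nu>\<close> is central modulo \<open>MB\<close>.\<close>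

lemma in_nu_span_ormul: "in_nu_span \<theta> x \<Longrightarrow> a \<in> FA \<Longrightarrow> in_nu_span \<theta> (ormul \<theta> x a)"
proof -
  assume "in_nu_span \<theta> x" and a: "a \<in> FA"
  then obtain c where c: "c \<in> FA" and x: "osub x (olmul c (nu \<theta>)) \<in> MC \<theta>"
    unfolding in_nu_span_def by blast
  have "osub (ormul \<theta> (nu \<theta>) a) (olmul a (nu \<theta>)) \<in> MB \<theta>"
    using nu_central_MB[OF a] unfolding MB_def by (rule bimod_gen_osub_sym)
  then have "olmul c (osub (ormul \<theta> (nu \<theta>) a) (olmul a (nu \<theta>))) \<in> MC \<theta>"
    using c by (simp add: MB_subset_MC MC_closed(3))
  moreover have "osub (ormul \<theta> x a) (olmul (fmul c a) (nu \<theta>))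
      = oadd (ormul \<theta> (osub x (olmul c (nu \<theta>))) a) (olmul c (osub (ormul \<theta> (nu \<theta>) a) (olmul a (nu \<theta>))))"
    by (intro ext) (simp add: om_apply fa_apply fmul_fsub_left fmul_fsub_right fmul_assoc)
  ultimately show ?thesis
    unfolding in_nu_span_def using x a c by (metis FA_fmul MC_closed(2,4))
qed

lemma dA_JC_in_nu_span: "a \<in> JC \<theta> \<Longrightarrow> in_nu_span \<theta> (dA \<theta> a)"
  unfolding JC_def
proof (induction rule: ideal_gen.induct)
  case (gen p)
  then consider "p \<in> relsA \<theta>" | "p = fS" | "p = ftil"
    by blast
  then show ?case
    by cases (simp_all add: dA_relsA MC_closed(1) dA_fS_MB MB_subset_MC in_nu_span_MC
        in_nu_span_nu nu_def[symmetric])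
next
  case zero
  then show ?case
    by (simp add: dA_linear MC_closed(1) in_nu_span_MC)
next
  case (add p q)
  then show ?case
    by (simp add: dA_linear in_nu_span_oadd)
next
  case (lmul p a)
  have "ormul \<theta> (dA \<theta> a) p \<in> MC \<theta>"
    using lmul.hyps by (simp add: JC_def qrel_JC_MC)
  then show ?case
    using lmul by (simp add: dA_fmul in_nu_span_oadd in_nu_span_olmul in_nu_span_MC)
next
  case (rmul p a)
  have "olmul p (dA \<theta> a) \<in> MC \<theta>"
    using rmul.hyps by (simp add: JC_def qrel_JC_MC)
  then show ?case
    using rmul by (simp add: dA_fmul in_nu_span_oadd in_nu_span_ormul in_nu_span_MC)
qed

lemma NC_in_nu_span: "n \<in> NC \<theta> \<Longrightarrow> in_nu_span \<theta> n"
  unfolding NC_def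
  by (induction rule: bimod_gen.induct)
    (auto simp: MC_closed(1) in_nu_span_MC dA_JC_in_nu_span in_nu_span_oadd in_nu_span_olmul
      in_nu_span_ormul)

lemma nu_NC: "nu \<theta> \<in> NC \<theta>"
  unfolding NC_def nu_def by (rule bimod_gen.gen) (use ftil_JC in blast)

lemma nu_torsion_free: "c \<in> FA \<Longrightarrow> olmul c (nu \<theta>) \<in> MC \<theta> \<Longrightarrow> c \<in> JC \<theta>"
proof -
  assume c: "c \<in> FA" and "olmul c (nu \<theta>) \<in> MC \<theta>"
  from this(2) have "nu_pairing (olmul c (nu \<theta>)) \<in> JC \<theta>"
    by (rule nu_pairing_MC)
  then have "fmul c (nu_pairing (nu \<theta>)) \<in> JC \<theta>"
    by (simp add: nu_pairing_def contract_linear)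
  moreover have "fmul c (fsub (nu_pairing (nu \<theta>)) fone) \<in> JC \<theta>"
    using JB_subset_JC[OF nu_pairing_nu] c unfolding JC_def by (rule ideal_gen.lmul)
  ultimately show "c \<in> JC \<theta>"
    unfolding JC_def fmul_fsub_right fmul_fone by (blast intro: ideal_gen_cong_mem[OF ideal_gen_cong_sym])
qed

lemma Pi_proj_dz:
  assumes "i \<in> {1..4}"
  shows "osub (Pi_proj \<theta> (dz i)) (oadd (dz i) (olmul (fsmul ((-1) ^ i) (zg i)) (nu \<theta>))) \<in> MC \<theta>"
proof -
  have "fsub (ginv \<theta> (dz i) (nu \<theta>)) (fsmul (- ((-1) ^ i)) (zg i)) \<in> JC \<theta>"
    using ginv_nu_cong[of "dz i" \<theta>] assms by (simp add: nu_pairing_dz)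
  then have "fsmul (-1) (fsub (ginv \<theta> (dz i) (nu \<theta>)) (fsmul (- ((-1) ^ i)) (zg i))) \<in> JC \<theta>"
    unfolding JC_def by (rule ideal_gen_fsmul)
  moreover have "osub (Pi_proj \<theta> (dz i)) (oadd (dz i) (olmul (fsmul ((-1) ^ i) (zg i)) (nu \<theta>)))
      = olmul (fsmul (-1) (fsub (ginv \<theta> (dz i) (nu \<theta>)) (fsmul (- ((-1) ^ i)) (zg i)))) (nu \<theta>)"
    unfolding Pi_proj_def
    by (intro ext) (simp add: om_apply fa_apply fmul_fsub_left fmul_fsmul_left algebra_simps)
  ultimately show ?thesis
    using nu_FA4 by (simp add: qrel_JC_MC)
qed

theorem proposition4p13:
  fixes \<theta> :: real
  shows "(\<forall>p\<in>FA. fsub (fmul p ftil) (fmul ftil p) \<in> JB \<theta>)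
       \<and> osub (nu \<theta>) (\<lambda>j. \<lambda>w. \<Sum>i\<in>{1..4}. hlow i j * zg i w) \<in> MB \<theta>
       \<and> (\<forall>p\<in>FA. osub (olmul p (nu \<theta>)) (ormul \<theta> (nu \<theta>) p) \<in> MB \<theta>)
       \<and> fsub (ginv \<theta> (nu \<theta>) (nu \<theta>)) fone \<in> JC \<theta>
       \<and> nc_hypersurface_basis \<theta> (nu \<theta>)
       \<and> (\<forall>i\<in>{1..4}. osub (Pi_proj \<theta> (dz i))
              (oadd (dz i) (olmul (fsmul ((-1) ^ i) (zg i)) (nu \<theta>))) \<in> MC \<theta>)"
proof -
  have "osub (nu \<theta>) (\<lambda>j w. \<Sum>i\<in>{1..4}. hlow i j * zg i w) = ozero"
    by (intro ext) (simp add: nu_eq_hlow om_apply ozero_apply)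
  then have nu_hlow: "osub (nu \<theta>) (\<lambda>j w. \<Sum>i\<in>{1..4}. hlow i j * zg i w) \<in> MB \<theta>"
    unfolding MB_def by (simp add: bimod_gen.zero)
  have "nc_hypersurface_basis \<theta> (nu \<theta>)"
    unfolding nc_hypersurface_basis_def in_nu_span_def[symmetric]
    using nu_FA4 nu_central_MB ginv_nu_nu nu_NC NC_in_nu_span nu_torsion_free by blast
  then show ?thesis
    using ftil_central nu_hlow nu_central_MB ginv_nu_nu Pi_proj_dz by blast
qed

end
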